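(* Let $L$ be a precompact Hausdorff co-Heyting algebra, let $x\in\mathcal I^{!\wedge}(L)$, and let $r$ be the cofoundation rank of $x$ in the ordered set $\mathcal I^{!\wedge}(L)$. Then $\dim_{L^*}x^*=r=\operatorname{codim}_L x^{\vee}$, where $x^\vee=\bigwedge\{y\in L: y\not\le x\}$.
   Context: A co-Heyting algebra is a bounded distributive lattice $(L,0,1,\vee,\wedge)$ such that $a-b=\min\{c\in L: a\le b\vee c\}$ exists for all $a,b$. For an ideal $I$, $L/I$ is the quotient by $a\equiv_I b\iff(a-b)\vee(b-a)\in I$. For a bounded distributive lattice $M$: $\operatorname{Spec}M$ is its set of prime filters ordered by inclusion; height/coheight of a prime filter are its foundation rank and its foundation rank for the reverse order in $\operatorname{Spec}M$; $\operatorname{codim}_M a=\min\{\operatorname{height}\mathfrak p: a\in\mathfrak p\}$ ($+\infty$ if none) and $\dim_M a=\sup\{\operatorname{coheight}\mathfrak p: a\in\mathfrak p\}$ ($-\infty$ if none). $L^*$ is $L$ with the reverse order (a bounded distributive lattice), and $x^*$ is $x$ viewed as an element of $L^*$. $dL=\{a:\operatorname{codim}_La\ge d\}$. $L$ is Hausdorff if every nonzero element has finite codimension; precompact if $L/dL$ is finite for every positive integer $d$. $\mathcal I^{!\wedge}(L)$ is the set of completely meet irreducible elements: $x\ne1$ such that $\bigwedge A\le x$ implies $a\le x$ for some $a\in A$. Cofoundation rank in an ordered set is foundation rank for the reverse order. *)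

theory Defs
  imports Main "HOL-Library.Dual_Ordered_Lattice" "HOL-Library.Extended_Real"
begin

text \<open>The foundation rank is reported in enat:
  a finite value n means rank exactly n; \<infinity> means rank \<ge> \<omega> (or undefined).\<close>

fun rank_level :: "'b set \<Rightarrow> ('b \<Rightarrow> 'b \<Rightarrow> bool) \<Rightarrow> nat \<Rightarrow> 'b set" where
  "rank_level S lt 0 = {}"
| "rank_level S lt (Suc n) = {p \<in> S. \<forall>q \<in> S. lt q p \<longrightarrow> q \<in> rank_level S lt n}"

definition found_rank :: "'b set \<Rightarrow> ('b \<Rightarrow> 'b \<Rightarrow> bool) \<Rightarrow> 'b \<Rightarrow> enat" where
  "found_rank S lt p =
     (if \<exists>n. p \<in> rank_level S lt (Suc n)
      then enat (LEAST n. p \<in> rank_level S lt (Suc n)) else \<infinity>)"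

definition cofound_rank :: "'b set \<Rightarrow> ('b \<Rightarrow> 'b \<Rightarrow> bool) \<Rightarrow> 'b \<Rightarrow> enat" where
  "cofound_rank S lt p = found_rank S (\<lambda>a b. lt b a) p"

definition prime_filter :: "'a::{bounded_lattice,distrib_lattice} set \<Rightarrow> bool" where
  "prime_filter F \<longleftrightarrow>
     top \<in> F \<and> bot \<notin> F \<and>
     (\<forall>a b. a \<in> F \<longrightarrow> a \<le> b \<longrightarrow> b \<in> F) \<and>
     (\<forall>a b. a \<in> F \<longrightarrow> b \<in> F \<longrightarrow> inf a b \<in> F) \<and>
     (\<forall>a b. sup a b \<in> F \<longrightarrow> a \<in> F \<or> b \<in> F)"

definition Spec :: "'a::{bounded_lattice,distrib_lattice} itself \<Rightarrow> 'a set set" where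
  "Spec _ = {F. prime_filter F}"

definition height :: "'a::{bounded_lattice,distrib_lattice} set \<Rightarrow> enat" where
  "height p = found_rank (Spec TYPE('a)) (\<subset>) p"

definition coheight :: "'a::{bounded_lattice,distrib_lattice} set \<Rightarrow> enat" where
  "coheight p = cofound_rank (Spec TYPE('a)) (\<subset>) p"

definition codim :: "'a::{bounded_lattice,distrib_lattice} \<Rightarrow> enat" where
  "codim a = (INF p \<in> {p \<in> Spec TYPE('a). a \<in> p}. height p)"

definition lat_dim :: "'a::{bounded_lattice,distrib_lattice} \<Rightarrow> ereal" where
  "lat_dim a = (if {p \<in> Spec TYPE('a). a \<in> p} = {} then -\<infinity>
            else (SUP p \<in> {p \<in> Spec TYPE('a). a \<in> p}. ereal_of_enat (coheight p)))"

definition co_heyting :: "'a::{bounded_lattice,distrib_lattice} itself \<Rightarrow> bool" where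
  "co_heyting _ \<longleftrightarrow> (\<forall>a b::'a. \<exists>c. a \<le> sup b c \<and> (\<forall>c'. a \<le> sup b c' \<longrightarrow> c \<le> c'))"

definition cdiff :: "'a::{bounded_lattice,distrib_lattice} \<Rightarrow> 'a \<Rightarrow> 'a" where
  "cdiff a b = (THE c. a \<le> sup b c \<and> (\<forall>c'. a \<le> sup b c' \<longrightarrow> c \<le> c'))"

definition quot_rel :: "'a::{bounded_lattice,distrib_lattice} set \<Rightarrow> ('a \<times> 'a) set" where
  "quot_rel I = {(a, b). sup (cdiff a b) (cdiff b a) \<in> I}"

definition codim_ideal :: "nat \<Rightarrow> 'a::{bounded_lattice,distrib_lattice} set" where
  "codim_ideal d = {a. codim a \<ge> enat d}"

definition hausdorff :: "'a::{bounded_lattice,distrib_lattice} itself \<Rightarrow> bool" where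
  "hausdorff _ \<longleftrightarrow> (\<forall>a::'a. a \<noteq> bot \<longrightarrow> codim a \<noteq> \<infinity>)"

definition precompact :: "'a::{bounded_lattice,distrib_lattice} itself \<Rightarrow> bool" where
  "precompact _ \<longleftrightarrow>
     (\<forall>d::nat. d > 0 \<longrightarrow> finite ((UNIV::'a set) // quot_rel (codim_ideal d :: 'a set)))"

definition is_glb :: "'a::order set \<Rightarrow> 'a \<Rightarrow> bool" where
  "is_glb A m \<longleftrightarrow> (\<forall>a\<in>A. m \<le> a) \<and> (\<forall>m'. (\<forall>a\<in>A. m' \<le> a) \<longrightarrow> m' \<le> m)"

definition cmi :: "'a::{bounded_lattice,distrib_lattice} set" where
  "cmi = {x. x \<noteq> top \<and> (\<forall>A m. is_glb A m \<longrightarrow> m \<le> x \<longrightarrow> (\<exists>a\<in>A. a \<le> x))}"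

definition vee :: "'a::{bounded_lattice,distrib_lattice} \<Rightarrow> 'a" where
  "vee x = (THE m. is_glb {y. \<not> y \<le> x} m)"

end

theory Submission
  imports Defs
begin

text \<open>For completely meet irreducible \<open>x\<close> the set \<open>nonbelow x = L - \<down>x\<close> is a prime filter, and all
  three quantities equal its height. Precompactness leaves only finitely many prime filters of
  bounded height; with Hausdorffness and Esakia's lemma this makes every prime filter of finite
  height principal. Complete meet irreducibility forces \<open>nonbelow x\<close> to have finite height, so it
  is generated by \<open>x\<^sup>\<or>\<close>, whose codimension is therefore its height. The prime filters below
  \<open>nonbelow x\<close> are again of the form \<open>nonbelow y\<close> with \<open>y\<close> completely meet irreducible, and
  \<open>nonbelow\<close> reverses order, so the cofoundation rank of \<open>x\<close> is this height as well. Finally,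
  complementation identifies \<open>Spec L\<^sup>*\<close> with \<open>Spec L\<close> in reverse order, turning \<open>dim x\<^sup>*\<close> into the
  largest height of a prime filter omitting \<open>x\<close>, attained by \<open>nonbelow x\<close>.\<close>

section \<open>Foundation rank\<close>

lemma rank_level_subset: "rank_level S lt n \<subseteq> S"
  by (cases n) auto

lemma rank_level_mono:
  assumes "m \<le> n"
  shows "rank_level S lt m \<subseteq> rank_level S lt n"
proof -
  have "rank_level S lt k \<subseteq> rank_level S lt (Suc k)" for k
    by (induction k) auto
  then show ?thesis
    using assms by (rule lift_Suc_mono_le)
qed

lemma found_rank_le_iff: "found_rank S lt p \<le> enat k \<longleftrightarrow> p \<in> rank_level S lt (Suc k)"
proof
  assume "found_rank S lt p \<le> enat k"
  then have ex: "\<exists>n. p \<in> rank_level S lt (Suc n)"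
    and le: "(LEAST n. p \<in> rank_level S lt (Suc n)) \<le> k"
    unfolding found_rank_def by (auto split: if_splits)
  from LeastI_ex[OF ex] le show "p \<in> rank_level S lt (Suc k)"
    by (meson Suc_le_mono rank_level_mono subsetD)
qed (auto simp: found_rank_def intro: Least_le)

lemma found_rank_less_iff: "found_rank S lt p < enat k \<longleftrightarrow> p \<in> rank_level S lt k"
proof (cases k)
  case (Suc j)
  have "found_rank S lt p < enat (Suc j) \<longleftrightarrow> found_rank S lt p \<le> enat j"
    by (cases "found_rank S lt p") auto
  then show ?thesis
    using Suc found_rank_le_iff by metis
qed (simp add: zero_enat_def[symmetric])

lemma found_rank_finite_imp_mem: "found_rank S lt p \<noteq> \<infinity> \<Longrightarrow> p \<in> S"
  using found_rank_le_iff rank_level_subset by (metis enat.exhaust order_refl subsetD)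

lemma found_rank_less:
  assumes "found_rank S lt p \<le> enat k" "lt q p" "q \<in> S"
  shows "found_rank S lt q < enat k"
  using assms by (simp add: found_rank_le_iff found_rank_less_iff)

lemma found_rank_Suc_obtain:
  assumes "found_rank S lt p = enat (Suc j)"
  obtains q where "q \<in> S" "lt q p" "found_rank S lt q = enat j"
proof -
  have p: "p \<in> rank_level S lt (Suc (Suc j))" "p \<notin> rank_level S lt (Suc j)"
    using assms found_rank_le_iff[of S lt p "Suc j"] found_rank_less_iff[of S lt p "Suc j"] by simp_all
  then obtain q where "q \<in> S" "lt q p" "q \<notin> rank_level S lt j"
    by auto
  moreover have "q \<in> rank_level S lt (Suc j)"
    using p(1) \<open>q \<in> S\<close> \<open>lt q p\<close> by simp
  ultimately show thesis
    using that found_rank_le_iff[of S lt q j] found_rank_less_iff[of S lt q j] by fastforce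
qed

lemma found_rank_transfer:
  assumes image: "f ` S = S'"
    and order: "\<And>p q. p \<in> S \<Longrightarrow> q \<in> S \<Longrightarrow> lt' (f q) (f p) \<longleftrightarrow> lt q p"
    and "p \<in> S"
  shows "found_rank S' lt' (f p) = found_rank S lt p"
proof -
  have "p \<in> S \<Longrightarrow> f p \<in> rank_level S' lt' n \<longleftrightarrow> p \<in> rank_level S lt n" for n p
  proof (induction n arbitrary: p)
    case (Suc n)
    have "f p \<in> rank_level S' lt' (Suc n) \<longleftrightarrow>
        (\<forall>q\<in>S. lt' (f q) (f p) \<longrightarrow> f q \<in> rank_level S' lt' n)"
      using Suc.prems image by auto
    also have "\<dots> \<longleftrightarrow> p \<in> rank_level S lt (Suc n)"
      using Suc order by auto
    finally show ?case .
  qed simp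
  with \<open>p \<in> S\<close> show ?thesis
    unfolding found_rank_def by presburger
qed

lemma found_rank_down_closed_subset:
  fixes p :: "'b::order"
  assumes "S' \<subseteq> S" and down: "\<And>q. q \<in> S \<Longrightarrow> q \<le> p \<Longrightarrow> q \<in> S'" and "p \<in> S'"
  shows "found_rank S' (<) p = found_rank S (<) p"
proof -
  have "q \<le> p \<Longrightarrow> q \<in> S' \<Longrightarrow> q \<in> rank_level S' (<) n \<longleftrightarrow> q \<in> rank_level S (<) n" for n q
  proof (induction n arbitrary: q)
    case (Suc n)
    then show ?case
      using \<open>S' \<subseteq> S\<close> down by (auto 0 4)
  qed simp
  then have "p \<in> rank_level S' (<) n \<longleftrightarrow> p \<in> rank_level S (<) n" for n
    using \<open>p \<in> S'\<close> by blast
  then show ?thesis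
    unfolding found_rank_def by presburger
qed

section \<open>Co-Heyting difference and prime filters\<close>

lemma cdiff_le_iff:
  fixes a b c :: "'a::{bounded_lattice,distrib_lattice}"
  assumes "co_heyting TYPE('a)"
  shows "cdiff a b \<le> c \<longleftrightarrow> a \<le> sup b c"
proof -
  obtain d where d: "a \<le> sup b d" "\<And>c'. a \<le> sup b c' \<Longrightarrow> d \<le> c'"
    using assms unfolding co_heyting_def by blast
  have "cdiff a b = d"
    unfolding cdiff_def by (rule the_equality) (use d in \<open>auto intro: antisym\<close>)
  with d show ?thesis
    by (meson order_trans sup_mono order_refl)
qed

lemma cdiff_eq_bot_iff:
  fixes a b :: "'a::{bounded_lattice,distrib_lattice}"
  assumes "co_heyting TYPE('a)"
  shows "cdiff a b = bot \<longleftrightarrow> a \<le> b"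
  using cdiff_le_iff[OF assms, of a b bot] by (simp add: bot_unique)

lemma mem_Spec_iff [simp]: "P \<in> Spec TYPE('a::{bounded_lattice,distrib_lattice}) \<longleftrightarrow> prime_filter P"
  by (simp add: Spec_def)

lemma prime_filter_top: "prime_filter P \<Longrightarrow> top \<in> P"
  by (simp add: prime_filter_def)

lemma prime_filter_bot: "prime_filter P \<Longrightarrow> bot \<notin> P"
  by (simp add: prime_filter_def)

lemma prime_filter_upward: "prime_filter P \<Longrightarrow> a \<in> P \<Longrightarrow> a \<le> b \<Longrightarrow> b \<in> P"
  unfolding prime_filter_def by blast

lemma prime_filter_inf_iff: "prime_filter P \<Longrightarrow> inf a b \<in> P \<longleftrightarrow> a \<in> P \<and> b \<in> P"
  unfolding prime_filter_def by (meson inf_le1 inf_le2)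

lemma prime_filter_sup_iff: "prime_filter P \<Longrightarrow> sup a b \<in> P \<longleftrightarrow> a \<in> P \<or> b \<in> P"
  unfolding prime_filter_def by (meson sup_ge1 sup_ge2)

definition lattice_filter :: "'a::lattice set \<Rightarrow> bool" where
  "lattice_filter F \<longleftrightarrow> (\<forall>a b. a \<in> F \<longrightarrow> a \<le> b \<longrightarrow> b \<in> F) \<and> (\<forall>a\<in>F. \<forall>b\<in>F. inf a b \<in> F)"

definition lattice_ideal :: "'a::bounded_lattice set \<Rightarrow> bool" where
  "lattice_ideal I \<longleftrightarrow> bot \<in> I \<and> (\<forall>a b. b \<in> I \<longrightarrow> a \<le> b \<longrightarrow> a \<in> I) \<and> (\<forall>a\<in>I. \<forall>b\<in>I. sup a b \<in> I)"

lemma lattice_filter_generated_insert: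
  assumes "lattice_filter M"
  shows "lattice_filter {z. \<exists>m\<in>M. inf m a \<le> z}"
  unfolding lattice_filter_def
proof (intro conjI allI impI ballI)
  fix u v assume "u \<in> {z. \<exists>m\<in>M. inf m a \<le> z}" "u \<le> v"
  then show "v \<in> {z. \<exists>m\<in>M. inf m a \<le> z}"
    using order_trans by blast
next
  fix u v assume "u \<in> {z. \<exists>m\<in>M. inf m a \<le> z}" "v \<in> {z. \<exists>m\<in>M. inf m a \<le> z}"
  then obtain m1 m2 where m: "m1 \<in> M" "inf m1 a \<le> u" "m2 \<in> M" "inf m2 a \<le> v"
    by blast
  have "inf (inf m1 m2) a \<le> inf m1 a" "inf (inf m1 m2) a \<le> inf m2 a"
    by (rule inf_mono; simp)+
  with m have "inf (inf m1 m2) a \<le> inf u v"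
    by (meson le_inf_iff order_trans)
  moreover have "inf m1 m2 \<in> M"
    using assms m unfolding lattice_filter_def by blast
  ultimately show "inf u v \<in> {z. \<exists>m\<in>M. inf m a \<le> z}"
    by blast
qed

lemma maximal_filter_disjoint_ideal_prime:
  fixes M :: "'a::{bounded_lattice,distrib_lattice} set"
  assumes "lattice_filter M" "M \<noteq> {}" "lattice_ideal I" "M \<inter> I = {}"
    and maximal: "\<And>F. lattice_filter F \<Longrightarrow> M \<subseteq> F \<Longrightarrow> F \<inter> I = {} \<Longrightarrow> F = M"
  shows "prime_filter M"
proof -
  have up: "\<And>a b. a \<in> M \<Longrightarrow> a \<le> b \<Longrightarrow> b \<in> M"
    and inf: "\<And>a b. a \<in> M \<Longrightarrow> b \<in> M \<Longrightarrow> inf a b \<in> M"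
    using \<open>lattice_filter M\<close> unfolding lattice_filter_def by blast+
  have I: "bot \<in> I" "\<And>a b. b \<in> I \<Longrightarrow> a \<le> b \<Longrightarrow> a \<in> I"
    "\<And>a b. a \<in> I \<Longrightarrow> b \<in> I \<Longrightarrow> sup a b \<in> I"
    using \<open>lattice_ideal I\<close> unfolding lattice_ideal_def by blast+
  have witness: "\<exists>m\<in>M. inf m a \<in> I" if "a \<notin> M" for a
  proof (rule ccontr)
    let ?F = "{z. \<exists>m\<in>M. inf m a \<le> z}"
    assume "\<not> (\<exists>m\<in>M. inf m a \<in> I)"
    then have "?F \<inter> I = {}"
      using I(2) by blast
    moreover have "M \<subseteq> ?F"
      using inf_le1 by blast
    ultimately have "?F = M"
      by (intro maximal lattice_filter_generated_insert \<open>lattice_filter M\<close>)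
    moreover have "a \<in> ?F"
      using \<open>M \<noteq> {}\<close> inf_le2 by blast
    ultimately show False
      using that by simp
  qed
  have "a \<in> M \<or> b \<in> M" if "sup a b \<in> M" for a b
  proof (rule ccontr)
    assume "\<not> (a \<in> M \<or> b \<in> M)"
    then obtain m1 m2 where m: "m1 \<in> M" "inf m1 a \<in> I" "m2 \<in> M" "inf m2 b \<in> I"
      using witness by blast
    have "inf (inf m1 m2) (sup a b) = sup (inf (inf m1 m2) a) (inf (inf m1 m2) b)"
      by (rule inf_sup_distrib1)
    also have "\<dots> \<le> sup (inf m1 a) (inf m2 b)"
      by (intro sup_mono inf_mono) simp_all
    finally have "inf (inf m1 m2) (sup a b) \<in> I"
      using m I(2,3) by blast
    moreover have "inf (inf m1 m2) (sup a b) \<in> M"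
      using m that inf by blast
    ultimately show False
      using \<open>M \<inter> I = {}\<close> by blast
  qed
  moreover have "top \<in> M"
    using \<open>M \<noteq> {}\<close> up top_greatest by blast
  moreover have "bot \<notin> M"
    using I(1) \<open>M \<inter> I = {}\<close> by blast
  ultimately show ?thesis
    unfolding prime_filter_def using up inf by blast
qed

theorem prime_filter_separation:
  fixes c :: "'a::{bounded_lattice,distrib_lattice}"
  assumes "lattice_ideal I" "c \<notin> I"
  obtains P where "prime_filter P" "c \<in> P" "P \<inter> I = {}"
proof -
  define \<A> where "\<A> = {F. lattice_filter F \<and> c \<in> F \<and> F \<inter> I = {}}"
  have "{z. c \<le> z} \<in> \<A>"
    using assms unfolding \<A>_def lattice_filter_def lattice_ideal_def by auto
  moreover have "\<Union>\<C> \<in> \<A>" if "\<C> \<noteq> {}" "subset.chain \<A> \<C>" for \<C>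
  proof -
    have "\<C> \<subseteq> \<A>" and chain: "\<And>F G. F \<in> \<C> \<Longrightarrow> G \<in> \<C> \<Longrightarrow> F \<subseteq> G \<or> G \<subseteq> F"
      using that(2) unfolding subset.chain_def by auto
    then have "lattice_filter (\<Union>\<C>)"
      unfolding lattice_filter_def
    proof (intro conjI allI impI ballI)
      fix a b assume "a \<in> \<Union>\<C>" "a \<le> b"
      then show "b \<in> \<Union>\<C>"
        using \<open>\<C> \<subseteq> \<A>\<close> unfolding \<A>_def lattice_filter_def by blast
    next
      fix a b assume "a \<in> \<Union>\<C>" "b \<in> \<Union>\<C>"
      then obtain F where "F \<in> \<C>" "a \<in> F" "b \<in> F"
        using chain by blast
      then show "inf a b \<in> \<Union>\<C>"
        using \<open>\<C> \<subseteq> \<A>\<close> unfolding \<A>_def lattice_filter_def by blast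
    qed
    then show ?thesis
      using \<open>\<C> \<subseteq> \<A>\<close> \<open>\<C> \<noteq> {}\<close> unfolding \<A>_def by blast
  qed
  ultimately obtain M where "M \<in> \<A>" "\<And>F. F \<in> \<A> \<Longrightarrow> M \<subseteq> F \<Longrightarrow> F = M"
    using subset_Zorn_nonempty[of \<A>] by blast
  then have "prime_filter M"
    using assms(1) by (intro maximal_filter_disjoint_ideal_prime) (auto simp: \<A>_def)
  with \<open>M \<in> \<A>\<close> show thesis
    using that unfolding \<A>_def by blast
qed

lemma prime_filter_obtain_not_le:
  fixes a y :: "'a::{bounded_lattice,distrib_lattice}"
  assumes "\<not> a \<le> y"
  obtains P where "prime_filter P" "a \<in> P" "y \<notin> P"
proof -
  have "lattice_ideal {z. z \<le> y}"
    unfolding lattice_ideal_def by auto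
  with assms obtain P where "prime_filter P" "a \<in> P" "P \<inter> {z. z \<le> y} = {}"
    by (auto elim: prime_filter_separation)
  with that show thesis
    by blast
qed

text \<open>Esakia's lemma: separate \<open>c\<close> from the ideal generated by \<open>b\<close> and the complement of \<open>R\<close>.\<close>

lemma cdiff_mem_prime_filter_obtain_below:
  fixes b c :: "'a::{bounded_lattice,distrib_lattice}"
  assumes "co_heyting TYPE('a)" "prime_filter R" "cdiff c b \<in> R"
  obtains P where "prime_filter P" "P \<subseteq> R" "c \<in> P" "b \<notin> P"
proof -
  define I where "I = {z. \<exists>w. w \<notin> R \<and> z \<le> sup b w}"
  have "lattice_ideal I"
    unfolding lattice_ideal_def
  proof (intro conjI allI impI ballI)
    show "bot \<in> I"
      using prime_filter_bot[OF \<open>prime_filter R\<close>] unfolding I_def by fastforce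
  next
    fix u v assume "u \<in> I" "v \<in> I"
    then obtain w1 w2 where "w1 \<notin> R" "u \<le> sup b w1" "w2 \<notin> R" "v \<le> sup b w2"
      unfolding I_def by blast
    moreover from this have "sup u v \<le> sup b (sup w1 w2)"
      by (meson le_sup_iff order_trans sup_ge1 sup_ge2)
    ultimately show "sup u v \<in> I"
      using prime_filter_sup_iff[OF \<open>prime_filter R\<close>] unfolding I_def by blast
  qed (auto simp: I_def intro: order_trans)
  moreover have "c \<notin> I"
    using cdiff_le_iff[OF assms(1)] prime_filter_upward[OF \<open>prime_filter R\<close> \<open>cdiff c b \<in> R\<close>]
    unfolding I_def by blast
  ultimately obtain P where P: "prime_filter P" "c \<in> P" "P \<inter> I = {}"
    by (rule prime_filter_separation)
  have "b \<in> I" and "- R \<subseteq> I"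
    using prime_filter_bot[OF \<open>prime_filter R\<close>] unfolding I_def by fastforce+
  with P that show thesis
    by blast
qed

section \<open>Height and codimension\<close>

lemma height_mono:
  assumes "prime_filter P" "P \<subseteq> Q"
  shows "height P \<le> height Q"
proof (cases "height Q")
  case (enat k)
  show ?thesis
  proof (cases "P = Q")
    case False
    with assms have "found_rank (Spec TYPE('a)) (\<subset>) P < enat k"
      using enat by (intro found_rank_less[where p = Q]) (auto simp: height_def)
    with enat show ?thesis
      by (simp add: height_def)
  qed simp
qed simp

lemma le_codim_iff: "k \<le> codim a \<longleftrightarrow> (\<forall>P. prime_filter P \<longrightarrow> a \<in> P \<longrightarrow> k \<le> height P)"
  by (auto simp: codim_def le_INF_iff)

lemma codim_le_height: "prime_filter P \<Longrightarrow> a \<in> P \<Longrightarrow> codim a \<le> height P"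
  using le_codim_iff by blast

lemma codim_antimono: "a \<le> b \<Longrightarrow> codim b \<le> codim a"
  unfolding le_codim_iff using codim_le_height prime_filter_upward by blast

lemma hausdorff_obtain_finite_height:
  fixes a :: "'a::{bounded_lattice,distrib_lattice}"
  assumes "hausdorff TYPE('a)" "a \<noteq> bot"
  obtains P where "prime_filter P" "a \<in> P" "height P \<noteq> \<infinity>"
proof -
  have "\<not> \<infinity> \<le> codim a"
    using assms unfolding hausdorff_def by simp
  with that show thesis
    unfolding le_codim_iff by auto
qed

lemma height_obtain_below:
  fixes P :: "'a::{bounded_lattice,distrib_lattice} set"
  assumes "height P = enat k" "j \<le> k"
  obtains G where "prime_filter G" "G \<subseteq> P" "height G = enat j"
proof -
  have "height P = enat (j + d) \<Longrightarrow> \<exists>G. prime_filter G \<and> G \<subseteq> P \<and> height G = enat j"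
    for d and P :: "'a set"
  proof (induction d arbitrary: P)
    case 0
    then show ?case
      using found_rank_finite_imp_mem[of "Spec TYPE('a)" "(\<subset>)" P] by (auto simp: height_def)
  next
    case (Suc d)
    have "found_rank (Spec TYPE('a)) (\<subset>) P = enat (Suc (j + d))"
      using Suc.prems by (simp add: height_def)
    then obtain Q where "Q \<subset> P" "height Q = enat (j + d)"
      unfolding height_def by (rule found_rank_Suc_obtain)
    with Suc.IH show ?case
      by (meson order_trans psubset_imp_subset)
  qed
  with assms that show thesis
    using le_Suc_ex by blast
qed

lemma prime_filter_eq_if_subset_height_eq:
  assumes "prime_filter G" "G \<subseteq> P" "height G = enat h" "height P = enat h"
  shows "G = P"
proof (rule ccontr)
  assume "G \<noteq> P"
  with assms have "found_rank (Spec TYPE('a)) (\<subset>) G < enat h"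
    by (intro found_rank_less[of _ _ P]) (auto simp: height_def)
  with assms(3) show False
    by (simp add: height_def)
qed

lemma prime_filter_closed_quot_rel_codim_ideal:
  fixes a b :: "'a::{bounded_lattice,distrib_lattice}"
  assumes "co_heyting TYPE('a)" "prime_filter P" "height P \<le> enat h" "a \<in> P"
    and "(a, b) \<in> quot_rel (codim_ideal (Suc h))"
  shows "b \<in> P"
proof -
  have "enat (Suc h) \<le> codim (sup (cdiff a b) (cdiff b a))"
    using assms(5) by (simp add: quot_rel_def codim_ideal_def)
  also have "\<dots> \<le> codim (cdiff a b)"
    by (rule codim_antimono) simp
  finally have "cdiff a b \<notin> P"
    using codim_le_height[OF \<open>prime_filter P\<close>] \<open>height P \<le> enat h\<close>
    by (metis Suc_n_not_le_n enat_ord_simps(1) order_trans)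
  moreover have "sup b (cdiff a b) \<in> P"
    using cdiff_le_iff[OF assms(1)] prime_filter_upward[OF \<open>prime_filter P\<close> \<open>a \<in> P\<close>] by blast
  ultimately show ?thesis
    using prime_filter_sup_iff[OF \<open>prime_filter P\<close>] by blast
qed

text \<open>A prime filter of height at most \<open>h\<close> is a union of classes of the finite quotient
  \<open>L/(h+1)L\<close>, so there are only finitely many of them.\<close>

lemma finite_prime_filters_height_le:
  assumes "co_heyting TYPE('a::{bounded_lattice,distrib_lattice})" "precompact TYPE('a)"
  shows "finite {P \<in> Spec TYPE('a). height P \<le> enat h}"
proof -
  define R :: "('a \<times> 'a) set" where "R = quot_rel (codim_ideal (Suc h))"
  define T where "T = {P \<in> Spec TYPE('a). height P \<le> enat h}"
  define classes where "classes P = {C \<in> UNIV // R. C \<subseteq> P}" for P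
  have "finite (UNIV // R)"
    using assms(2) unfolding precompact_def R_def by simp
  moreover have "classes ` T \<subseteq> Pow (UNIV // R)"
    unfolding classes_def by blast
  ultimately have "finite (classes ` T)"
    by (meson finite_Pow_iff finite_subset)
  have refl: "(a, a) \<in> R" for a
  proof -
    have "codim (bot :: 'a) = \<infinity>"
      using le_codim_iff[of \<infinity> "bot :: 'a"] prime_filter_bot
      by (simp add: top.extremum_unique) blast
    moreover have "cdiff a a = bot"
      using cdiff_eq_bot_iff[OF assms(1)] by blast
    ultimately show ?thesis
      by (simp add: R_def quot_rel_def codim_ideal_def)
  qed
  have "\<Union>(classes P) = P" if "P \<in> T" for P
  proof
    have "R `` {a} \<subseteq> P" if "a \<in> P" for a
      using prime_filter_closed_quot_rel_codim_ideal[OF assms(1)] \<open>P \<in> T\<close> that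
      unfolding R_def T_def by auto
    with refl show "P \<subseteq> \<Union>(classes P)"
      unfolding classes_def quotient_def by blast
  qed (auto simp: classes_def)
  then have "inj_on classes T"
    by (rule inj_on_inverseI)
  with \<open>finite (classes ` T)\<close> show ?thesis
    unfolding T_def[symmetric] by (rule finite_imageD)
qed

lemma prime_filter_obtain_avoiding:
  fixes P :: "'a::{bounded_lattice,distrib_lattice} set"
  assumes "prime_filter P" "finite T" "\<forall>Q\<in>T. prime_filter Q \<and> \<not> P \<subseteq> Q"
  obtains c where "c \<in> P" "\<forall>Q\<in>T. c \<notin> Q"
proof -
  from assms(2,3) have "\<exists>c\<in>P. \<forall>Q\<in>T. c \<notin> Q"
  proof (induction T rule: finite_induct)
    case empty
    then show ?case
      using prime_filter_top[OF assms(1)] by blast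
  next
    case (insert Q T)
    obtain c where c: "c \<in> P" "\<forall>Q'\<in>T. c \<notin> Q'"
      using insert by blast
    obtain a where a: "a \<in> P" "a \<notin> Q"
      using insert.prems by blast
    have "inf c a \<in> P"
      using c a by (simp add: prime_filter_inf_iff[OF assms(1)])
    moreover have "inf c a \<notin> Q'" if "Q' \<in> insert Q T" for Q'
    proof -
      have "prime_filter Q'"
        using that insert.prems by blast
      with that c a show ?thesis
        by (auto simp: prime_filter_inf_iff)
    qed
    ultimately show ?case
      by blast
  qed
  with that show thesis
    by blast
qed

lemma prime_filter_obtain_outside_common:
  fixes P :: "'a::{bounded_lattice,distrib_lattice} set"
  assumes "prime_filter P" "finite T" "\<forall>Q\<in>T. prime_filter Q \<and> \<not> Q \<subseteq> P"
  obtains b where "b \<notin> P" "\<forall>Q\<in>T. b \<in> Q"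
proof -
  from assms(2,3) have "\<exists>b. b \<notin> P \<and> (\<forall>Q\<in>T. b \<in> Q)"
  proof (induction T rule: finite_induct)
    case empty
    then show ?case
      using prime_filter_bot[OF assms(1)] by blast
  next
    case (insert Q T)
    obtain b where b: "b \<notin> P" "\<forall>Q'\<in>T. b \<in> Q'"
      using insert by blast
    obtain a where a: "a \<in> Q" "a \<notin> P"
      using insert.prems by blast
    have "sup b a \<notin> P"
      using b a by (simp add: prime_filter_sup_iff[OF assms(1)])
    moreover have "sup b a \<in> Q'" if "Q' \<in> insert Q T" for Q'
    proof -
      have "prime_filter Q'"
        using that insert.prems by blast
      with that b a show ?thesis
        by (auto simp: prime_filter_sup_iff)
    qed
    ultimately show ?case
      by blast
  qed
  with that show thesis
    by blast
qed

lemma prime_filter_finite_height_isolated: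
  fixes P :: "'a::{bounded_lattice,distrib_lattice} set"
  assumes "co_heyting TYPE('a)" "precompact TYPE('a)" "prime_filter P" "height P = enat h"
  obtains c b where "c \<in> P" "b \<notin> P"
    "\<And>R. prime_filter R \<Longrightarrow> height R \<noteq> \<infinity> \<Longrightarrow> c \<in> R \<Longrightarrow> b \<notin> R \<Longrightarrow> P \<subseteq> R"
proof -
  define T where "T = {Q \<in> Spec TYPE('a). height Q \<le> enat h}"
  have "finite T"
    unfolding T_def using assms(1,2) by (rule finite_prime_filters_height_le)
  have "finite {Q \<in> T. \<not> P \<subseteq> Q}"
    using \<open>finite T\<close> by simp
  moreover have "\<forall>Q\<in>{Q \<in> T. \<not> P \<subseteq> Q}. prime_filter Q \<and> \<not> P \<subseteq> Q"
    by (simp add: T_def)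
  ultimately obtain c where c: "c \<in> P" "\<forall>Q\<in>{Q \<in> T. \<not> P \<subseteq> Q}. c \<notin> Q"
    by (rule prime_filter_obtain_avoiding[OF assms(3)])
  have "finite {Q \<in> T. \<not> Q \<subseteq> P}"
    using \<open>finite T\<close> by simp
  moreover have "\<forall>Q\<in>{Q \<in> T. \<not> Q \<subseteq> P}. prime_filter Q \<and> \<not> Q \<subseteq> P"
    by (simp add: T_def)
  ultimately obtain b where b: "b \<notin> P" "\<forall>Q\<in>{Q \<in> T. \<not> Q \<subseteq> P}. b \<in> Q"
    by (rule prime_filter_obtain_outside_common[OF assms(3)])
  have "P \<subseteq> R" if R: "prime_filter R" "height R \<noteq> \<infinity>" "c \<in> R" "b \<notin> R" for R
  proof -
    obtain k where k: "height R = enat k"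
      using R(2) by auto
    show ?thesis
    proof (cases "k \<le> h")
      case True
      then have "R \<in> T"
        using R(1) k by (simp add: T_def)
      then show ?thesis
        using c(2) R(3) by blast
    next
      case False
      then obtain G where G: "prime_filter G" "G \<subseteq> R" "height G = enat h"
        using height_obtain_below[OF k, of h] by auto
      then have "G \<in> T"
        by (simp add: T_def)
      then have "G \<subseteq> P"
        using b(2) G(2) R(4) by blast
      with G assms(4) show ?thesis
        using prime_filter_eq_if_subset_height_eq by blast
    qed
  qed
  with c b that show thesis
    by blast
qed

text \<open>Isolation makes \<open>cdiff c b\<close> a generator: if it were not below some \<open>f \<in> P\<close>, Hausdorffness
  and Esakia's lemma would produce a prime filter of finite height containing \<open>c\<close> but not
  \<open>sup b f\<close>, contradicting isolation.\<close>

lemma prime_filter_finite_height_principal: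
  fixes P :: "'a::{bounded_lattice,distrib_lattice} set"
  assumes ch: "co_heyting TYPE('a)" and "precompact TYPE('a)" "hausdorff TYPE('a)"
    and P: "prime_filter P" and "height P \<noteq> \<infinity>"
  obtains e where "P = {f. e \<le> f}"
proof -
  obtain h where "height P = enat h"
    using \<open>height P \<noteq> \<infinity>\<close> by auto
  then obtain c b where c: "c \<in> P" and b: "b \<notin> P"
    and isolated: "\<And>R. prime_filter R \<Longrightarrow> height R \<noteq> \<infinity> \<Longrightarrow> c \<in> R \<Longrightarrow> b \<notin> R \<Longrightarrow> P \<subseteq> R"
    using prime_filter_finite_height_isolated[OF ch \<open>precompact TYPE('a)\<close> P] by blast
  have "sup b (cdiff c b) \<in> P"
    using cdiff_le_iff[OF ch] prime_filter_upward[OF P c] by blast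
  with b have "cdiff c b \<in> P"
    by (simp add: prime_filter_sup_iff[OF P])
  moreover have "cdiff c b \<le> f" if "f \<in> P" for f
  proof (rule ccontr)
    assume "\<not> cdiff c b \<le> f"
    then have "cdiff c (sup b f) \<noteq> bot"
      by (simp add: cdiff_le_iff[OF ch] cdiff_eq_bot_iff[OF ch])
    then obtain R where R: "prime_filter R" "cdiff c (sup b f) \<in> R" "height R \<noteq> \<infinity>"
      using hausdorff_obtain_finite_height \<open>hausdorff TYPE('a)\<close> by blast
    then obtain R' where R': "prime_filter R'" "R' \<subseteq> R" "c \<in> R'" "sup b f \<notin> R'"
      using cdiff_mem_prime_filter_obtain_below[OF ch] by blast
    have "height R' \<noteq> \<infinity>"
      using height_mono[OF R'(1,2)] R(3) by (metis enat_ord_simps(5))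
    moreover have "b \<notin> R'" "f \<notin> R'"
      using R'(1,4) by (simp_all add: prime_filter_sup_iff)
    ultimately show False
      using isolated[OF R'(1) _ R'(3)] that by blast
  qed
  ultimately have "P = {f. cdiff c b \<le> f}"
    using prime_filter_upward[OF P] by blast
  with that show thesis .
qed

section \<open>The prime filter attached to a completely meet irreducible element\<close>

definition nonbelow :: "'a::order \<Rightarrow> 'a set" where
  "nonbelow x = {z. \<not> z \<le> x}"

lemma nonbelow_subset_iff: "nonbelow z \<subseteq> nonbelow y \<longleftrightarrow> y \<le> z"
  unfolding nonbelow_def by (auto intro: order_trans)

lemma nonbelow_psubset_iff: "nonbelow z \<subset> nonbelow y \<longleftrightarrow> y < z"
  using nonbelow_subset_iff[of z y] nonbelow_subset_iff[of y z] by (auto simp: less_le_not_le)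

lemma prime_filter_subset_nonbelow_iff: "prime_filter P \<Longrightarrow> P \<subseteq> nonbelow x \<longleftrightarrow> x \<notin> P"
  unfolding nonbelow_def using prime_filter_upward by blast

lemma prime_filter_nonbelow:
  assumes "x \<in> cmi"
  shows "prime_filter (nonbelow x)"
proof -
  have "a \<le> x \<or> b \<le> x" if "inf a b \<le> x" for a b
  proof -
    have "is_glb {a, b} (inf a b)"
      unfolding is_glb_def by auto
    with assms that show ?thesis
      unfolding cmi_def by blast
  qed
  moreover have "x \<noteq> top"
    using assms unfolding cmi_def by blast
  ultimately show ?thesis
    unfolding prime_filter_def nonbelow_def by (auto intro: order_trans simp: top_le)
qed

lemma cmi_if_nonbelow_principal:
  assumes "nonbelow y = {f. e \<le> f}"
  shows "y \<in> cmi"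
  unfolding cmi_def
proof (intro CollectI conjI allI impI)
  have "e \<in> nonbelow y"
    using assms by simp
  then show "y \<noteq> top"
    by (auto simp: nonbelow_def)
next
  fix A m assume "is_glb A m" "m \<le> y"
  then show "\<exists>a\<in>A. a \<le> y"
    using assms unfolding is_glb_def nonbelow_def by (metis mem_Collect_eq order_trans)
qed

lemma vee_eq_if_nonbelow_principal:
  assumes "nonbelow x = {f. e \<le> f}"
  shows "vee x = e"
proof -
  have "is_glb {y. \<not> y \<le> x} e"
    using assms unfolding is_glb_def nonbelow_def by auto
  moreover have "m = e" if "is_glb {y. \<not> y \<le> x} m" for m
    using that \<open>is_glb {y. \<not> y \<le> x} e\<close> unfolding is_glb_def by (blast intro: antisym)
  ultimately show ?thesis
    unfolding vee_def by (rule the_equality)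
qed

lemma codim_eq_height_if_principal:
  assumes "prime_filter P" "P = {f. e \<le> f}"
  shows "codim e = height P"
proof (rule antisym)
  show "codim e \<le> height P"
    using assms by (intro codim_le_height) auto
  show "height P \<le> codim e"
    unfolding le_codim_iff using assms prime_filter_upward height_mono
    by (metis mem_Collect_eq subsetI)
qed

lemma infinite_height_obtain_high_codim:
  fixes P :: "'a::{bounded_lattice,distrib_lattice} set"
  assumes "co_heyting TYPE('a)" "precompact TYPE('a)" "prime_filter P" "height P = \<infinity>"
  obtains c where "c \<in> P" "enat n < codim c"
proof -
  define T where "T = {Q \<in> Spec TYPE('a). height Q \<le> enat n}"
  have "finite T"
    unfolding T_def using assms(1,2) by (rule finite_prime_filters_height_le)
  moreover have "\<forall>Q\<in>T. prime_filter Q \<and> \<not> P \<subseteq> Q"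
    using height_mono[OF assms(3)] assms(4) by (fastforce simp: T_def)
  ultimately obtain c where c: "c \<in> P" "\<forall>Q\<in>T. c \<notin> Q"
    by (rule prime_filter_obtain_avoiding[OF assms(3)])
  have "enat (Suc n) \<le> codim c"
    unfolding le_codim_iff using c(2) by (auto simp: T_def Suc_ile_eq)
  with c(1) that show thesis
    by (simp add: Suc_ile_eq)
qed

lemma hausdorff_is_glb_bot:
  fixes cs :: "nat \<Rightarrow> 'a::{bounded_lattice,distrib_lattice}"
  assumes "hausdorff TYPE('a)" "\<And>n. enat n < codim (cs n)"
  shows "is_glb (range cs) bot"
  unfolding is_glb_def
proof (intro conjI allI impI ballI)
  fix m assume "\<forall>a\<in>range cs. m \<le> a"
  then have "enat n < codim m" for n
    using assms(2)[of n] codim_antimono[of m "cs n"] by auto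
  then have "codim m = \<infinity>"
    by (metis enat.exhaust less_irrefl)
  with assms(1) show "m \<le> bot"
    unfolding hausdorff_def by (metis order_refl)
qed simp

text \<open>The infimum of elements of \<open>nonbelow x\<close> of ever larger codimension is \<open>bot\<close> by
  Hausdorffness; complete meet irreducibility of \<open>x\<close> then rules out infinite height.\<close>

lemma height_nonbelow_finite:
  fixes x :: "'a::{bounded_lattice,distrib_lattice}"
  assumes "co_heyting TYPE('a)" "precompact TYPE('a)" "hausdorff TYPE('a)" "x \<in> cmi"
  shows "height (nonbelow x) \<noteq> \<infinity>"
proof
  assume "height (nonbelow x) = \<infinity>"
  then have "\<forall>n. \<exists>c. c \<in> nonbelow x \<and> enat n < codim c"
    using infinite_height_obtain_high_codim[OF assms(1,2) prime_filter_nonbelow[OF assms(4)]] by metis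
  then obtain cs where cs: "\<And>n. cs n \<in> nonbelow x" "\<And>n. enat n < codim (cs n)"
    by metis
  have "is_glb (range cs) bot"
    using assms(3) cs(2) by (rule hausdorff_is_glb_bot)
  then obtain n where "cs n \<le> x"
    using assms(4) unfolding cmi_def by fastforce
  with cs(1) show False
    by (simp add: nonbelow_def)
qed

text \<open>\<open>z\<close> lies in every prime filter below \<open>nonbelow x\<close> that is not below \<open>Q\<close>, but not in \<open>Q\<close>;
  hence the prime filters omitting \<open>sup x z\<close> are exactly those below \<open>Q\<close>.\<close>

lemma prime_filter_below_nonbelow_obtain:
  fixes x :: "'a::{bounded_lattice,distrib_lattice}"
  assumes fin: "finite {R \<in> Spec TYPE('a). R \<subseteq> nonbelow x}"
    and Q: "prime_filter Q" "Q \<subseteq> nonbelow x"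
  obtains y where "Q = nonbelow (sup x y)"
proof -
  define F where "F = {R \<in> Spec TYPE('a). R \<subseteq> nonbelow x \<and> \<not> R \<subseteq> Q}"
  have "finite F"
    using fin by (rule finite_subset[rotated]) (auto simp: F_def)
  moreover have "\<forall>R\<in>F. prime_filter R \<and> \<not> R \<subseteq> Q"
    by (simp add: F_def)
  ultimately obtain z where z: "z \<notin> Q" "\<forall>R\<in>F. z \<in> R"
    by (rule prime_filter_obtain_outside_common[OF Q(1)])
  have "x \<notin> Q"
    using Q prime_filter_subset_nonbelow_iff by blast
  with z(1) have "sup x z \<notin> Q"
    by (simp add: prime_filter_sup_iff[OF Q(1)])
  then have "Q \<subseteq> nonbelow (sup x z)"
    using Q(1) prime_filter_subset_nonbelow_iff by blast
  moreover have "a \<in> Q" if "a \<in> nonbelow (sup x z)" for a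
  proof -
    obtain R where R: "prime_filter R" "a \<in> R" "sup x z \<notin> R"
      using \<open>a \<in> nonbelow (sup x z)\<close> unfolding nonbelow_def by (auto elim: prime_filter_obtain_not_le)
    then have "x \<notin> R" "z \<notin> R"
      by (simp_all add: prime_filter_sup_iff)
    have "R \<subseteq> Q"
    proof (rule ccontr)
      assume "\<not> R \<subseteq> Q"
      with R(1) \<open>x \<notin> R\<close> have "R \<in> F"
        by (simp add: F_def prime_filter_subset_nonbelow_iff)
      with z(2) \<open>z \<notin> R\<close> show False
        by blast
    qed
    with R(2) show ?thesis
      by blast
  qed
  ultimately show thesis
    using that by blast
qed

lemma prime_filter_below_nonbelow_cmi:
  fixes x :: "'a::{bounded_lattice,distrib_lattice}"
  assumes ch: "co_heyting TYPE('a)" and pc: "precompact TYPE('a)" and hd: "hausdorff TYPE('a)"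
    and x: "x \<in> cmi" and Q: "prime_filter Q" "Q \<subseteq> nonbelow x"
  shows "Q \<in> nonbelow ` cmi"
proof -
  obtain h where h: "height (nonbelow x) = enat h"
    using height_nonbelow_finite[OF ch pc hd x] by auto
  have "height R \<le> enat h" if "prime_filter R" "R \<subseteq> nonbelow x" for R
    using height_mono[OF that] h by simp
  then have "{R \<in> Spec TYPE('a). R \<subseteq> nonbelow x} \<subseteq> {R \<in> Spec TYPE('a). height R \<le> enat h}"
    by (simp add: Collect_mono)
  then have "finite {R \<in> Spec TYPE('a). R \<subseteq> nonbelow x}"
    using finite_prime_filters_height_le[OF ch pc] by (rule finite_subset)
  then obtain y where y: "Q = nonbelow y"
    using Q by (rule prime_filter_below_nonbelow_obtain)
  have "height Q \<noteq> \<infinity>"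
    using height_mono[OF Q] h by (cases "height Q") auto
  then obtain e where "Q = {f. e \<le> f}"
    using prime_filter_finite_height_principal[OF ch pc hd Q(1)] by blast
  with y have "y \<in> cmi"
    by (metis cmi_if_nonbelow_principal)
  with y show ?thesis
    by blast
qed

lemma cofound_rank_cmi_eq_height_nonbelow:
  fixes x :: "'a::{bounded_lattice,distrib_lattice}"
  assumes ch: "co_heyting TYPE('a)" and pc: "precompact TYPE('a)" and hd: "hausdorff TYPE('a)"
    and x: "x \<in> cmi"
  shows "cofound_rank cmi (<) x = height (nonbelow x)"
proof -
  have "found_rank cmi (\<lambda>a b. b < a) x = found_rank (nonbelow ` cmi) (\<subset>) (nonbelow x)"
    using x by (intro found_rank_transfer[symmetric]) (simp_all add: nonbelow_psubset_iff)
  also have "\<dots> = found_rank (Spec TYPE('a)) (\<subset>) (nonbelow x)"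
    using x prime_filter_nonbelow prime_filter_below_nonbelow_cmi[OF ch pc hd x]
    by (intro found_rank_down_closed_subset) auto
  finally show ?thesis
    by (simp add: cofound_rank_def height_def)
qed

section \<open>Duality\<close>

definition dual_compl :: "'a set \<Rightarrow> 'a dual set" where
  "dual_compl P = dual ` (- P)"

lemma mem_dual_compl_iff: "d \<in> dual_compl P \<longleftrightarrow> undual d \<notin> P"
  unfolding dual_compl_def by (metis ComplD ComplI dual_undual image_iff undual_dual)

lemma dual_compl_subset_iff: "dual_compl P \<subseteq> dual_compl Q \<longleftrightarrow> Q \<subseteq> P"
  by (metis dual_compl_def compl_le_compl_iff inj_dual inj_image_subset_iff)

lemma dual_compl_psubset_iff: "dual_compl P \<subset> dual_compl Q \<longleftrightarrow> Q \<subset> P"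
  using dual_compl_subset_iff[of P Q] dual_compl_subset_iff[of Q P] by (auto simp: less_le_not_le)

lemma prime_filter_dual_compl_iff: "prime_filter (dual_compl P) \<longleftrightarrow> prime_filter P"
proof -
  have all_dual: "(\<forall>d. \<Phi> d) \<longleftrightarrow> (\<forall>a. \<Phi> (dual a))" for \<Phi> :: "'a dual \<Rightarrow> bool"
    by (metis dual_undual)
  show ?thesis
    unfolding prime_filter_def by (simp add: all_dual mem_dual_compl_iff) blast
qed

lemma Spec_dual_eq: "Spec TYPE('a::{bounded_lattice,distrib_lattice} dual) = dual_compl ` Spec TYPE('a)"
proof (intro set_eqI iffI)
  fix F :: "'a dual set"
  assume "F \<in> Spec TYPE('a dual)"
  moreover have "F = dual_compl {a. dual a \<notin> F}"
    by (auto simp: mem_dual_compl_iff)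
  ultimately show "F \<in> dual_compl ` Spec TYPE('a)"
    by (metis image_eqI mem_Spec_iff prime_filter_dual_compl_iff)
qed (auto simp: prime_filter_dual_compl_iff)

lemma coheight_dual_compl:
  fixes P :: "'a::{bounded_lattice,distrib_lattice} set"
  assumes "prime_filter P"
  shows "coheight (dual_compl P) = height P"
  unfolding coheight_def cofound_rank_def height_def
  using assms by (intro found_rank_transfer) (auto simp: Spec_dual_eq dual_compl_psubset_iff)

lemma lat_dim_dual_eq_height_nonbelow:
  fixes x :: "'a::{bounded_lattice,distrib_lattice}"
  assumes "x \<in> cmi"
  shows "lat_dim (dual x) = ereal_of_enat (height (nonbelow x))"
proof -
  define A where "A = {P \<in> Spec TYPE('a). P \<subseteq> nonbelow x}"
  have "{F \<in> Spec TYPE('a dual). dual x \<in> F} = dual_compl ` A"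
    by (auto simp: A_def Spec_dual_eq mem_dual_compl_iff prime_filter_subset_nonbelow_iff)
  moreover have "nonbelow x \<in> A"
    using prime_filter_nonbelow[OF assms] by (simp add: A_def)
  moreover have "(SUP P\<in>A. ereal_of_enat (height P)) = ereal_of_enat (height (nonbelow x))"
  proof (rule antisym)
    show "(SUP P\<in>A. ereal_of_enat (height P)) \<le> ereal_of_enat (height (nonbelow x))"
      by (rule SUP_least) (simp add: A_def height_mono)
    show "ereal_of_enat (height (nonbelow x)) \<le> (SUP P\<in>A. ereal_of_enat (height P))"
      using \<open>nonbelow x \<in> A\<close> by (rule SUP_upper)
  qed
  moreover have "(SUP P\<in>A. ereal_of_enat (coheight (dual_compl P))) = (SUP P\<in>A. ereal_of_enat (height P))"
    by (rule SUP_cong) (simp_all add: A_def coheight_dual_compl)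
  ultimately show ?thesis
    unfolding lat_dim_def by (auto simp: image_comp)
qed

theorem proposition6p8:
  fixes x :: "'a::{bounded_lattice,distrib_lattice}"
  assumes "co_heyting TYPE('a)"
    and "precompact TYPE('a)"
    and "hausdorff TYPE('a)"
    and "x \<in> cmi"
  shows "lat_dim (dual x) = ereal_of_enat (cofound_rank cmi (<) x)
       \<and> cofound_rank cmi (<) x = codim (vee x)"
proof -
  obtain e where e: "nonbelow x = {f. e \<le> f}"
    using prime_filter_finite_height_principal[OF assms(1-3) prime_filter_nonbelow[OF assms(4)]]
      height_nonbelow_finite[OF assms] by blast
  have "codim (vee x) = height (nonbelow x)"
    using vee_eq_if_nonbelow_principal[OF e]
      codim_eq_height_if_principal[OF prime_filter_nonbelow[OF assms(4)] e] by simp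
  with lat_dim_dual_eq_height_nonbelow[OF assms(4)] cofound_rank_cmi_eq_height_nonbelow[OF assms]
  show ?thesis
    by simp
qed

end
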